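(* Let \(S\) be an inverse semigroup with zero and unit. The arrow space of the groupoid \(\mathcal G(S)\) is locally quasi-compact and sober.
   Context: \(E=E(S)\) is the idempotent semilattice. A character on \(E\) is a map \(\varphi\colon E\to\{0,1\}\) with \(\varphi(0)=0\), \(\varphi(1)=1\), \(\varphi(ef)=\varphi(e)\varphi(f)\). \(\hat E\) is the set of characters with the topology generated by \(U_e=\{\varphi:\varphi(e)=1\}\). \(S\) acts on \(\hat E\) by \(s\cdot\varphi(e)=\varphi(s^*es)\) for \(\varphi\in U_{s^*s}\). \(\mathcal G(S)\) has object space \(\hat E\). Its arrows are classes \([s,\varphi]\) (\(s\in S\), \(\varphi\in U_{s^*s}\)), with \((s,\varphi)\sim(t,\psi)\) iff \(\varphi=\psi\) and \(se=te\) for some \(e\in E\) with \(\varphi(e)=1\). The structure maps are \(\mathrm s[s,\varphi]=\varphi\), \(\mathrm r[s,\varphi]=s\cdot\varphi\), \([s,t\cdot\psi][t,\psi]=[st,\psi]\). The arrow topology is generated by the sets \(\{[s,\varphi]:\varphi\in U\}\), \(U\subseteq U_{s^*s}\) open. A space is sober if every non-empty irreducible closed subset is the closure of a unique point. A closed set \(A\) is irreducible if \(A=A_1\cup A_2\) with \(A_i\) closed forces \(A_1=A\) or \(A_2=A\). *)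

theory Defs
  imports "HOL-Analysis.Analysis"
begin

definition inverse_semigroup_zu :: "('a \<Rightarrow> 'a \<Rightarrow> 'a) \<Rightarrow> 'a \<Rightarrow> 'a \<Rightarrow> bool" where
  "inverse_semigroup_zu m z u \<longleftrightarrow>
     (\<forall>a b c. m (m a b) c = m a (m b c)) \<and>
     (\<forall>s. \<exists>!t. m (m s t) s = s \<and> m (m t s) t = t) \<and>
     (\<forall>s. m z s = z \<and> m s z = z) \<and>
     (\<forall>s. m u s = s \<and> m s u = s)"

definition inv_el :: "('a \<Rightarrow> 'a \<Rightarrow> 'a) \<Rightarrow> 'a \<Rightarrow> 'a" where
  "inv_el m s = (THE t. m (m s t) s = s \<and> m (m t s) t = t)"

definition idems :: "('a \<Rightarrow> 'a \<Rightarrow> 'a) \<Rightarrow> 'a set" where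
  "idems m = {e. m e e = e}"

text \<open>Characters on E, represented as functions 'a => bool which are False off E.\<close>
definition characters :: "('a \<Rightarrow> 'a \<Rightarrow> 'a) \<Rightarrow> 'a \<Rightarrow> 'a \<Rightarrow> ('a \<Rightarrow> bool) set" where
  "characters m z u = {\<phi>. \<not> \<phi> z \<and> \<phi> u \<and>
      (\<forall>e\<in>idems m. \<forall>f\<in>idems m. \<phi> (m e f) = (\<phi> e \<and> \<phi> f)) \<and>
      (\<forall>x. x \<notin> idems m \<longrightarrow> \<not> \<phi> x)}"

definition Uset :: "('a \<Rightarrow> 'a \<Rightarrow> 'a) \<Rightarrow> 'a \<Rightarrow> 'a \<Rightarrow> 'a \<Rightarrow> ('a \<Rightarrow> bool) set" where
  "Uset m z u e = {\<phi> \<in> characters m z u. \<phi> e}"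

definition char_topology :: "('a \<Rightarrow> 'a \<Rightarrow> 'a) \<Rightarrow> 'a \<Rightarrow> 'a \<Rightarrow> ('a \<Rightarrow> bool) topology" where
  "char_topology m z u =
     subtopology (topology_generated_by {Uset m z u e | e. e \<in> idems m}) (characters m z u)"

text \<open>The germ [s,phi]: equivalence class of (s,phi), phi in U_{s^*s}.\<close>
definition germ :: "('a \<Rightarrow> 'a \<Rightarrow> 'a) \<Rightarrow> 'a \<Rightarrow> 'a \<Rightarrow> 'a \<Rightarrow> ('a \<Rightarrow> bool) \<Rightarrow> ('a \<times> ('a \<Rightarrow> bool)) set" where
  "germ m z u s \<phi> = {(t, \<psi>). \<psi> \<in> Uset m z u (m (inv_el m t) t) \<and> \<psi> = \<phi> \<and>
       (\<exists>e\<in>idems m. \<phi> e \<and> m s e = m t e)}"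

definition arrows :: "('a \<Rightarrow> 'a \<Rightarrow> 'a) \<Rightarrow> 'a \<Rightarrow> 'a \<Rightarrow> ('a \<times> ('a \<Rightarrow> bool)) set set" where
  "arrows m z u = {germ m z u s \<phi> | s \<phi>. \<phi> \<in> Uset m z u (m (inv_el m s) s)}"

definition arrow_topology :: "('a \<Rightarrow> 'a \<Rightarrow> 'a) \<Rightarrow> 'a \<Rightarrow> 'a \<Rightarrow> ('a \<times> ('a \<Rightarrow> bool)) set topology" where
  "arrow_topology m z u =
     subtopology
       (topology_generated_by
          {{germ m z u s \<phi> | \<phi>. \<phi> \<in> U} | s U.
              openin (char_topology m z u) U \<and> U \<subseteq> Uset m z u (m (inv_el m s) s)})
       (arrows m z u)"

definition locally_quasi_compact :: "'b topology \<Rightarrow> bool" where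
  "locally_quasi_compact X \<longleftrightarrow> neighbourhood_base_of (compactin X) X"

definition irreducible_closed :: "'b topology \<Rightarrow> 'b set \<Rightarrow> bool" where
  "irreducible_closed X A \<longleftrightarrow> closedin X A \<and>
     (\<forall>A1 A2. closedin X A1 \<and> closedin X A2 \<and> A = A1 \<union> A2 \<longrightarrow> A1 = A \<or> A2 = A)"

definition sober_space :: "'b topology \<Rightarrow> bool" where
  "sober_space X \<longleftrightarrow>
     (\<forall>A. A \<noteq> {} \<and> irreducible_closed X A \<longrightarrow> (\<exists>!x. x \<in> topspace X \<and> X closure_of {x} = A))"

end

theory Submission
  imports Defs
begin

text \<open>
  For each s the map \<open>\<phi> \<mapsto> [s,\<phi>]\<close> is an open embedding of \<open>U_{s*s}\<close> into the arrow space,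
  and these open sets cover it, so everything can be read off the character space. Open sets
  of characters are upward closed for the pointwise order. Hence a basic open set \<open>U_e\<close>
  (e \<noteq> 0) has a least element, the principal character of e; every open set containing it
  contains \<open>U_e\<close>, so \<open>U_e\<close> is compact: this gives local quasi-compactness.
  For an irreducible closed set A of arrows and a germ \<open>[s,\<phi>] \<in> A\<close>, irreducibility makes
  the set of characters \<phi> with [s,\<phi>] \<in> A directed, so its pointwise disjunction is again a
  character; its germ lies in A and is a generic point of A, unique since pointwise order
  is the specialization order (the space is T0).
\<close>

lemma generate_topology_on_subset_Union:
  "generate_topology_on \<B> W \<Longrightarrow> W \<subseteq> \<Union>\<B>"
  by (induction rule: generate_topology_on.induct) auto

lemma openin_subtopology_generated_by_iff:
  assumes "\<Union>\<B> \<subseteq> S"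
  shows "openin (subtopology (topology_generated_by \<B>) S) W \<longleftrightarrow> generate_topology_on \<B> W"
proof -
  have "generate_topology_on \<B> T \<Longrightarrow> T \<inter> S = T" for T
    using generate_topology_on_subset_Union assms by blast
  then show ?thesis
    unfolding openin_subtopology openin_topology_generated_by_iff by metis
qed

lemma topspace_subtopology_generated_by:
  "S \<subseteq> \<Union>\<B> \<Longrightarrow> topspace (subtopology (topology_generated_by \<B>) S) = S"
  by auto

lemma generate_topology_on_basic_neighbourhood:
  assumes "generate_topology_on \<B> W" "x \<in> W"
    and Int_basic: "\<And>b1 b2 x. b1 \<in> \<B> \<Longrightarrow> b2 \<in> \<B> \<Longrightarrow> x \<in> b1 \<inter> b2 \<Longrightarrow> \<exists>b\<in>\<B>. x \<in> b \<and> b \<subseteq> b1 \<inter> b2"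
  shows "\<exists>b\<in>\<B>. x \<in> b \<and> b \<subseteq> W"
  using assms(1,2)
proof (induction arbitrary: x rule: generate_topology_on.induct)
  case (Int a b)
  then obtain b1 b2 where "b1 \<in> \<B>" "x \<in> b1" "b1 \<subseteq> a" "b2 \<in> \<B>" "x \<in> b2" "b2 \<subseteq> b"
    by blast
  then obtain b0 where "b0 \<in> \<B>" "x \<in> b0" "b0 \<subseteq> b1 \<inter> b2"
    using Int_basic by blast
  with \<open>b1 \<subseteq> a\<close> \<open>b2 \<subseteq> b\<close> show ?case by blast
next
  case (UN K)
  then obtain k b where "k \<in> K" "b \<in> \<B>" "x \<in> b" "b \<subseteq> k" by blast
  then show ?case by blast
qed blast+

lemma compactin_if_in_every_neighbourhood:
  assumes "K \<subseteq> topspace X" "x \<in> K" "\<And>T. openin X T \<Longrightarrow> x \<in> T \<Longrightarrow> K \<subseteq> T"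
  shows "compactin X K"
  unfolding compactin_def
proof (intro conjI allI impI)
  fix \<U> assume cover: "(\<forall>U\<in>\<U>. openin X U) \<and> K \<subseteq> \<Union>\<U>"
  then obtain T where "T \<in> \<U>" "x \<in> T" using assms(2) by blast
  moreover have "K \<subseteq> T" using cover \<open>T \<in> \<U>\<close> \<open>x \<in> T\<close> assms(3) by blast
  ultimately show "\<exists>\<F>. finite \<F> \<and> \<F> \<subseteq> \<U> \<and> K \<subseteq> \<Union>\<F>" by (intro exI[of _ "{T}"]) auto
qed (use assms in auto)

lemma irreducible_closed_openin_Int:
  assumes "irreducible_closed X A" "openin X T1" "openin X T2" "T1 \<inter> A \<noteq> {}" "T2 \<inter> A \<noteq> {}"
  shows "T1 \<inter> T2 \<inter> A \<noteq> {}"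
proof
  assume disjoint: "T1 \<inter> T2 \<inter> A = {}"
  have "closedin X (A - T1)" "closedin X (A - T2)"
    using assms(1-3) by (auto simp: irreducible_closed_def)
  moreover have "A = (A - T1) \<union> (A - T2)" using disjoint by blast
  ultimately have "A - T1 = A \<or> A - T2 = A"
    using assms(1) unfolding irreducible_closed_def by blast
  with assms(4,5) show False by blast
qed

lemma sober_spaceI:
  assumes "\<And>A. A \<noteq> {} \<Longrightarrow> irreducible_closed X A \<Longrightarrow> \<exists>x\<in>topspace X. X closure_of {x} = A"
    and "\<And>x y. x \<in> topspace X \<Longrightarrow> y \<in> topspace X \<Longrightarrow> X closure_of {x} = X closure_of {y} \<Longrightarrow> x = y"
  shows "sober_space X"
  unfolding sober_space_def using assms by metis

lemma in_closure_of_singletonD: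
  "x \<in> X closure_of {y} \<Longrightarrow> openin X T \<Longrightarrow> x \<in> T \<Longrightarrow> y \<in> T"
  by (auto simp: in_closure_of)

lemma in_closure_of_singletonI:
  "x \<in> topspace X \<Longrightarrow> (\<And>T. openin X T \<Longrightarrow> x \<in> T \<Longrightarrow> y \<in> T) \<Longrightarrow> x \<in> X closure_of {y}"
  by (auto simp: in_closure_of)

locale inverse_monoid_zero =
  fixes m :: "'a \<Rightarrow> 'a \<Rightarrow> 'a" and z u :: 'a
  assumes inverse_semigroup: "inverse_semigroup_zu m z u"
begin

abbreviation inv :: "'a \<Rightarrow> 'a" where "inv s \<equiv> inv_el m s"
abbreviation E :: "'a set" where "E \<equiv> idems m"

lemma assoc [simp]: "m (m a b) c = m a (m b c)"
  using inverse_semigroup unfolding inverse_semigroup_zu_def by blast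

lemma zero_right [simp]: "m s z = z" and unit_right [simp]: "m s u = s"
  using inverse_semigroup unfolding inverse_semigroup_zu_def by blast+

lemma ex1_inverse: "\<exists>!t. m (m s t) s = s \<and> m (m t s) t = t"
  using inverse_semigroup unfolding inverse_semigroup_zu_def by blast

lemma inverse_laws: "m s (m (inv s) s) = s" "m (inv s) (m s (inv s)) = inv s"
  using theI'[OF ex1_inverse[of s]] unfolding inv_el_def by auto

lemma inverse_unique: "m s (m t s) = s \<Longrightarrow> m t (m s t) = t \<Longrightarrow> t = inv s"
  unfolding inv_el_def by (rule the1_equality[OF ex1_inverse, symmetric]) auto

lemma idems_iff: "e \<in> E \<longleftrightarrow> m e e = e"
  by (simp add: idems_def)

lemma idem_left_absorb: "e \<in> E \<Longrightarrow> m e (m e c) = m e c"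
  by (metis assoc idems_iff)

lemma unit_idem: "u \<in> E"
  by (simp add: idems_iff)

lemma inverse_mult_self_idem: "m (inv s) s \<in> E"
  by (metis assoc idems_iff inverse_laws(2))

lemma inverse_idem: "e \<in> E \<Longrightarrow> inv e = e"
  by (metis idems_iff inverse_unique)

text \<open>With \<open>x = (ef)\<^sup>*\<close>, the element \<open>fxe\<close> is also an inverse of \<open>ef\<close>, hence equal to \<open>x\<close>;
  this makes \<open>x\<close> idempotent, so \<open>ef = x\<^sup>* = x\<close>.\<close>
lemma idem_mult_closed:
  assumes e: "e \<in> E" and f: "f \<in> E"
  shows "m e f \<in> E"
proof -
  define x where "x = inv (m e f)"
  have x1: "m e (m f (m x (m e f))) = m e f"
    using inverse_laws(1)[of "m e f"] by (simp add: x_def)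
  have x2: "m x (m e (m f (m x c))) = m x c" for c
    using inverse_laws(2)[of "m e f"] by (metis assoc x_def)
  have ee: "m e (m e c) = m e c" "m f (m f c) = m f c" for c
    using e f idem_left_absorb by auto
  have "m f (m x e) = x"
    unfolding x_def
    by (rule inverse_unique) (use x1 x2 ee in \<open>simp_all flip: x_def\<close>)
  then have x_idem: "m x x = x"
    by (metis assoc x2)
  have "m e f = inv x"
    by (rule inverse_unique) (use x1 x2[of u] in simp_all)
  with x_idem show ?thesis
    using inverse_idem by (simp add: idems_iff)
qed

lemma idem_commute:
  assumes e: "e \<in> E" and f: "f \<in> E"
  shows "m e f = m f e"
proof -
  have ef: "m e f \<in> E" "m f e \<in> E" using idem_mult_closed e f by auto
  have "m f e = inv (m e f)"
    by (rule inverse_unique) (use ef e f in \<open>metis assoc idems_iff\<close>)+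
  with ef show ?thesis by (simp add: inverse_idem)
qed

abbreviation Chars :: "('a \<Rightarrow> bool) set" where "Chars \<equiv> characters m z u"
abbreviation U :: "'a \<Rightarrow> ('a \<Rightarrow> bool) set" where "U \<equiv> Uset m z u"
abbreviation char_top :: "('a \<Rightarrow> bool) topology" where "char_top \<equiv> char_topology m z u"

lemma char_mult: "\<phi> \<in> Chars \<Longrightarrow> e \<in> E \<Longrightarrow> f \<in> E \<Longrightarrow> \<phi> (m e f) \<longleftrightarrow> \<phi> e \<and> \<phi> f"
  unfolding characters_def by blast

lemma char_support: "\<phi> \<in> Chars \<Longrightarrow> \<phi> x \<Longrightarrow> x \<in> E"
  unfolding characters_def by blast

lemma char_zero: "\<phi> \<in> Chars \<Longrightarrow> \<not> \<phi> z" and char_unit: "\<phi> \<in> Chars \<Longrightarrow> \<phi> u"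
  unfolding characters_def by blast+

lemma mem_U_iff: "\<phi> \<in> U e \<longleftrightarrow> \<phi> \<in> Chars \<and> \<phi> e"
  by (simp add: Uset_def)

lemma openin_char_top_iff: "openin char_top W \<longleftrightarrow> generate_topology_on {U e | e. e \<in> E} W"
  unfolding char_topology_def by (rule openin_subtopology_generated_by_iff) (auto simp: mem_U_iff)

lemma openin_U: "e \<in> E \<Longrightarrow> openin char_top (U e)"
  unfolding openin_char_top_iff by (rule generate_topology_on.Basis) auto

lemma char_top_basic_neighbourhood:
  assumes "openin char_top W" "\<phi> \<in> W"
  shows "\<exists>e\<in>E. \<phi> \<in> U e \<and> U e \<subseteq> W"
proof -
  have "\<exists>b\<in>{U e | e. e \<in> E}. \<phi> \<in> b \<and> b \<subseteq> W"
  proof (rule generate_topology_on_basic_neighbourhood)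
    show "generate_topology_on {U e | e. e \<in> E} W" using assms(1) by (simp add: openin_char_top_iff)
    show "\<phi> \<in> W" by fact
    fix b\<^sub>1 b\<^sub>2 \<psi> assume b: "b\<^sub>1 \<in> {U e | e. e \<in> E}" "b\<^sub>2 \<in> {U e | e. e \<in> E}" "\<psi> \<in> b\<^sub>1 \<inter> b\<^sub>2"
    then obtain e f where "e \<in> E" "f \<in> E" "b\<^sub>1 = U e" "b\<^sub>2 = U f" by blast
    then have "b\<^sub>1 \<inter> b\<^sub>2 = U (m e f)" "m e f \<in> E"
      using idem_mult_closed by (auto simp: mem_U_iff char_mult)
    with b(3) show "\<exists>b\<in>{U e | e. e \<in> E}. \<psi> \<in> b \<and> b \<subseteq> b\<^sub>1 \<inter> b\<^sub>2" by blast
  qed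
  then show ?thesis by blast
qed

lemma openin_char_top_upward_closed:
  assumes "openin char_top W" "\<phi> \<in> W" "\<psi> \<in> Chars" "\<phi> \<le> \<psi>"
  shows "\<psi> \<in> W"
proof -
  obtain e where "\<phi> \<in> U e" "U e \<subseteq> W"
    using char_top_basic_neighbourhood assms(1,2) by blast
  with assms(3,4) show ?thesis by (auto simp: mem_U_iff le_fun_def)
qed

definition principal_char :: "'a \<Rightarrow> 'a \<Rightarrow> bool" where
  "principal_char e = (\<lambda>f. f \<in> E \<and> m e f = e)"

lemma idem_absorbs_mult_iff:
  assumes e: "e \<in> E" and f: "f \<in> E" and g: "g \<in> E"
  shows "m e (m f g) = e \<longleftrightarrow> m e f = e \<and> m e g = e"
proof
  assume efg: "m e (m f g) = e"
  have "m e f = m e (m f (m g f))" by (metis assoc efg)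
  also have "\<dots> = m e (m f (m f g))" by (simp only: idem_commute[OF f g])
  also have "\<dots> = e" by (simp only: idem_left_absorb[OF f] efg)
  finally show "m e f = e \<and> m e g = e"
    using efg g by (metis assoc)
qed (metis assoc)

lemma principal_char_in_U:
  assumes "e \<in> E" "e \<noteq> z"
  shows "principal_char e \<in> U e"
  using assms unit_idem idem_mult_closed idem_absorbs_mult_iff
  by (auto simp: mem_U_iff characters_def principal_char_def idems_iff)

lemma principal_char_le: "e \<in> E \<Longrightarrow> \<psi> \<in> U e \<Longrightarrow> principal_char e \<le> \<psi>"
  by (auto simp: principal_char_def mem_U_iff) (metis char_mult)

lemma Sup_chars_in_chars:
  assumes "B \<subseteq> Chars" "B \<noteq> {}"
    and directed: "\<And>e f. e \<in> E \<Longrightarrow> f \<in> E \<Longrightarrow> Sup B e \<Longrightarrow> Sup B f \<Longrightarrow> Sup B (m e f)"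
  shows "Sup B \<in> Chars"
proof -
  have "Sup B (m e f) \<longleftrightarrow> Sup B e \<and> Sup B f" if "e \<in> E" "f \<in> E" for e f
    using directed[OF that] char_mult[OF _ that] assms(1) by auto
  with assms(1,2) show ?thesis
    unfolding characters_def by (auto simp: char_zero char_unit char_support)
qed

lemma Sup_in_closure:
  assumes "B \<subseteq> Chars" "openin char_top W" "Sup B \<in> W"
  shows "W \<inter> B \<noteq> {}"
proof -
  obtain e where "Sup B \<in> U e" "U e \<subseteq> W"
    using char_top_basic_neighbourhood assms(2,3) by blast
  then obtain \<phi> where "\<phi> \<in> B" "\<phi> e" by (auto simp: mem_U_iff)
  then have "\<phi> \<in> U e" using assms(1) by (auto simp: mem_U_iff)
  with \<open>\<phi> \<in> B\<close> \<open>U e \<subseteq> W\<close> show ?thesis by blast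
qed

abbreviation ss :: "'a \<Rightarrow> 'a" where "ss s \<equiv> m (inv s) s"
abbreviation \<gamma> :: "'a \<Rightarrow> ('a \<Rightarrow> bool) \<Rightarrow> ('a \<times> ('a \<Rightarrow> bool)) set" where
  "\<gamma> s \<phi> \<equiv> germ m z u s \<phi>"
abbreviation Arr :: "('a \<times> ('a \<Rightarrow> bool)) set set" where "Arr \<equiv> arrows m z u"
abbreviation arr_top :: "('a \<times> ('a \<Rightarrow> bool)) set topology" where
  "arr_top \<equiv> arrow_topology m z u"
abbreviation fibre :: "('a \<times> ('a \<Rightarrow> bool)) set set \<Rightarrow> 'a \<Rightarrow> ('a \<Rightarrow> bool) set" where
  "fibre A s \<equiv> {\<phi> \<in> U (ss s). \<gamma> s \<phi> \<in> A}"

lemma openin_U_ss: "openin char_top (U (ss s))"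
  using openin_U inverse_mult_self_idem by blast

lemma mem_germ_iff:
  "(t, \<psi>) \<in> \<gamma> s \<phi> \<longleftrightarrow> \<psi> \<in> U (ss t) \<and> \<psi> = \<phi> \<and> (\<exists>e\<in>E. \<phi> e \<and> m s e = m t e)"
  unfolding germ_def by auto

lemma germ_self: "\<phi> \<in> U (ss s) \<Longrightarrow> (s, \<phi>) \<in> \<gamma> s \<phi>"
  using inverse_mult_self_idem by (auto simp: mem_germ_iff mem_U_iff)

lemma germ_inj: "\<phi> \<in> U (ss s) \<Longrightarrow> \<gamma> s \<phi> = \<gamma> t \<psi> \<Longrightarrow> \<phi> = \<psi>"
  using germ_self unfolding germ_def by blast

lemma germ_eqD: "\<phi> \<in> U (ss s) \<Longrightarrow> \<gamma> s \<phi> = \<gamma> t \<phi> \<Longrightarrow> \<exists>e\<in>E. \<phi> e \<and> m s e = m t e"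
  using germ_self mem_germ_iff by metis

lemma germ_subset:
  assumes e: "e \<in> E" "\<psi> e" "m s e = m t e" and \<psi>: "\<psi> \<in> Chars"
  shows "\<gamma> s \<psi> \<subseteq> \<gamma> t \<psi>"
proof
  fix x assume "x \<in> \<gamma> s \<psi>"
  then obtain r f where x: "x = (r, \<psi>)" "\<psi> \<in> U (ss r)" and f: "f \<in> E" "\<psi> f" "m s f = m r f"
    unfolding germ_def by blast
  have "m t (m e f) = m (m s e) f" using e by simp
  also have "\<dots> = m (m s f) e" using idem_commute[OF e(1) f(1)] by simp
  also have "\<dots> = m r (m e f)" using f idem_commute[OF e(1) f(1)] by simp
  finally have "m t (m e f) = m r (m e f)" .
  moreover have "m e f \<in> E" "\<psi> (m e f)"
    using idem_mult_closed char_mult[OF \<psi>] e f by auto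
  ultimately show "x \<in> \<gamma> t \<psi>" using x by (auto simp: mem_germ_iff)
qed

lemma germ_eqI: "e \<in> E \<Longrightarrow> \<psi> e \<Longrightarrow> m s e = m t e \<Longrightarrow> \<psi> \<in> Chars \<Longrightarrow> \<gamma> s \<psi> = \<gamma> t \<psi>"
  using germ_subset[of e \<psi> s t] germ_subset[of e \<psi> t s] by auto

lemma arrowsE:
  assumes "x \<in> Arr"
  obtains s \<phi> where "x = \<gamma> s \<phi>" "\<phi> \<in> U (ss s)"
  using assms unfolding arrows_def by blast

lemma germ_mem_arrows: "\<phi> \<in> U (ss s) \<Longrightarrow> \<gamma> s \<phi> \<in> Arr"
  by (auto simp: arrows_def)

lemma openin_arr_top_iff:
  "openin arr_top W \<longleftrightarrow>
   generate_topology_on {\<gamma> s ` V | s V. openin char_top V \<and> V \<subseteq> U (ss s)} W"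
proof -
  have "{\<gamma> s \<phi> | \<phi>. \<phi> \<in> V} = \<gamma> s ` V" for s V
    by blast
  moreover have "\<Union>{\<gamma> s ` V | s V. openin char_top V \<and> V \<subseteq> U (ss s)} \<subseteq> Arr"
  proof (rule Union_least)
    fix X assume "X \<in> {\<gamma> s ` V | s V. openin char_top V \<and> V \<subseteq> U (ss s)}"
    then obtain s V where "X = \<gamma> s ` V" "V \<subseteq> U (ss s)" by blast
    then show "X \<subseteq> Arr" using germ_mem_arrows by auto
  qed
  ultimately show ?thesis
    unfolding arrow_topology_def by (simp only: openin_subtopology_generated_by_iff)
qed

lemma openin_germ_image: "openin char_top V \<Longrightarrow> V \<subseteq> U (ss s) \<Longrightarrow> openin arr_top (\<gamma> s ` V)"
  unfolding openin_arr_top_iff by (rule generate_topology_on.Basis) blast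

lemma topspace_arr_top: "topspace arr_top = Arr"
proof -
  have "x \<in> \<Union>{{\<gamma> s \<phi> | \<phi>. \<phi> \<in> V} | s V. openin char_top V \<and> V \<subseteq> U (ss s)}"
    if x: "x \<in> Arr" for x
  proof -
    obtain s \<phi> where "x = \<gamma> s \<phi>" "\<phi> \<in> U (ss s)" using x by (rule arrowsE)
    then have "x \<in> {\<gamma> s \<phi> | \<phi>. \<phi> \<in> U (ss s)}" by blast
    moreover have "{\<gamma> s \<phi> | \<phi>. \<phi> \<in> U (ss s)} \<in>
        {{\<gamma> s \<phi> | \<phi>. \<phi> \<in> V} | s V. openin char_top V \<and> V \<subseteq> U (ss s)}"
      using openin_U_ss by blast
    ultimately show ?thesis by blast
  qed
  then show ?thesis
    unfolding arrow_topology_def by (intro topspace_subtopology_generated_by) blast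
qed

lemma germ_in_topspace: "\<phi> \<in> U (ss s) \<Longrightarrow> \<gamma> s \<phi> \<in> topspace arr_top"
  by (simp add: topspace_arr_top germ_mem_arrows)

lemma openin_germ_preimage_basic:
  assumes V: "openin char_top V" "V \<subseteq> U (ss t)"
  shows "openin char_top (fibre (\<gamma> t ` V) s)"
proof (subst openin_subopen, intro ballI)
  fix \<phi> assume "\<phi> \<in> fibre (\<gamma> t ` V) s"
  then obtain \<psi> where \<phi>: "\<phi> \<in> U (ss s)" "\<psi> \<in> V" "\<gamma> s \<phi> = \<gamma> t \<psi>" by blast
  then have "\<phi> = \<psi>" using germ_inj by blast
  then obtain e where e: "e \<in> E" "\<phi> e" "m s e = m t e" using germ_eqD \<phi> by blast
  define T where "T = U e \<inter> V \<inter> U (ss s)"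
  have "openin char_top T" unfolding T_def using openin_U[OF e(1)] V(1) openin_U_ss by blast
  moreover have "\<phi> \<in> T" unfolding T_def using \<phi> \<open>\<phi> = \<psi>\<close> e by (auto simp: mem_U_iff)
  moreover have "T \<subseteq> fibre (\<gamma> t ` V) s"
  proof
    fix \<rho> assume "\<rho> \<in> T"
    then have \<rho>: "\<rho> \<in> U e" "\<rho> \<in> V" "\<rho> \<in> U (ss s)" unfolding T_def by blast+
    then have "\<gamma> s \<rho> = \<gamma> t \<rho>" using germ_eqI[OF e(1) _ e(3)] by (simp add: mem_U_iff)
    then have "\<gamma> s \<rho> \<in> \<gamma> t ` V" using \<rho>(2) by (rule image_eqI)
    with \<rho>(3) show "\<rho> \<in> fibre (\<gamma> t ` V) s" by simp
  qed
  ultimately show "\<exists>T. openin char_top T \<and> \<phi> \<in> T \<and> T \<subseteq> fibre (\<gamma> t ` V) s"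
    by blast
qed

lemma openin_germ_preimage:
  "openin arr_top W \<Longrightarrow> openin char_top (fibre W s)"
  unfolding openin_arr_top_iff
proof (induction rule: generate_topology_on.induct)
  case (Int a b)
  have "fibre (a \<inter> b) s = fibre a s \<inter> fibre b s" by auto
  with Int show ?case by auto
next
  case (UN K)
  have "fibre (\<Union>K) s = (\<Union>k\<in>K. fibre k s)" by auto
  with UN show ?case by auto
qed (auto intro: openin_germ_preimage_basic)

lemma openin_arr_top_upward_closed:
  assumes "openin arr_top W" "\<phi> \<in> U (ss s)" "\<gamma> s \<phi> \<in> W" "\<psi> \<in> Chars" "\<phi> \<le> \<psi>"
  shows "\<gamma> s \<psi> \<in> W"
proof -
  have "\<psi> \<in> U (ss s)" using assms(2,4,5) by (auto simp: mem_U_iff)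
  with openin_char_top_upward_closed[OF openin_germ_preimage[OF assms(1)]] assms
  show ?thesis by blast
qed

lemma germ_le_if_in_closure:
  assumes "\<phi> \<in> U (ss s)" "\<psi> \<in> U (ss s)" "\<gamma> s \<phi> \<in> arr_top closure_of {\<gamma> s \<psi>}"
  shows "\<phi> \<le> \<psi>"
proof (rule predicate1I)
  fix a assume "\<phi> a"
  then have a: "a \<in> E" using assms(1) char_support by (auto simp: mem_U_iff)
  have "openin arr_top (\<gamma> s ` (U a \<inter> U (ss s)))"
    using openin_germ_image openin_U[OF a] openin_U_ss by blast
  moreover have "\<gamma> s \<phi> \<in> \<gamma> s ` (U a \<inter> U (ss s))"
    using assms(1) \<open>\<phi> a\<close> by (auto simp: mem_U_iff)
  ultimately have "\<gamma> s \<psi> \<in> \<gamma> s ` (U a \<inter> U (ss s))"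
    by (rule in_closure_of_singletonD[OF assms(3)])
  then obtain \<rho> where "\<rho> \<in> U a" "\<gamma> s \<psi> = \<gamma> s \<rho>" by blast
  moreover have "\<psi> = \<rho>" using germ_inj[OF assms(2) \<open>\<gamma> s \<psi> = \<gamma> s \<rho>\<close>] .
  ultimately show "\<psi> a" by (simp add: mem_U_iff)
qed

lemma arr_top_T0:
  assumes "x \<in> Arr" "y \<in> Arr" "arr_top closure_of {x} = arr_top closure_of {y}"
  shows "x = y"
proof -
  have self: "v \<in> arr_top closure_of {v}" if "v \<in> Arr" for v
    using that closure_of_subset[of "{v}" arr_top] by (simp add: topspace_arr_top)
  have xy: "x \<in> arr_top closure_of {y}" and yx: "y \<in> arr_top closure_of {x}"
    using self assms by auto
  obtain s \<phi> where x: "x = \<gamma> s \<phi>" "\<phi> \<in> U (ss s)" using assms(1) by (rule arrowsE)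
  have "openin arr_top (\<gamma> s ` U (ss s))" using openin_germ_image openin_U_ss by blast
  moreover have "x \<in> \<gamma> s ` U (ss s)" using x by simp
  ultimately have "y \<in> \<gamma> s ` U (ss s)" by (rule in_closure_of_singletonD[OF xy])
  then obtain \<psi> where y: "y = \<gamma> s \<psi>" "\<psi> \<in> U (ss s)" by blast
  have "\<phi> \<le> \<psi>" using germ_le_if_in_closure[OF x(2) y(2)] xy x(1) y(1) by simp
  moreover have "\<psi> \<le> \<phi>" using germ_le_if_in_closure[OF y(2) x(2)] yx x(1) y(1) by simp
  ultimately show ?thesis using x(1) y(1) by (simp add: antisym)
qed

lemma locally_quasi_compact_arr_top: "locally_quasi_compact arr_top"
  unfolding locally_quasi_compact_def neighbourhood_base_of
proof (intro allI impI, elim conjE)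
  fix W x assume W: "openin arr_top W" and "x \<in> W"
  then have "x \<in> Arr" using openin_subset topspace_arr_top by blast
  then obtain s \<phi> where x: "x = \<gamma> s \<phi>" "\<phi> \<in> U (ss s)" by (rule arrowsE)
  obtain e where e: "e \<in> E" "\<phi> \<in> U e" "U e \<subseteq> fibre W s"
    using char_top_basic_neighbourhood[OF openin_germ_preimage[OF W]] x \<open>x \<in> W\<close> by blast
  have "e \<noteq> z" using e(2) char_zero by (auto simp: mem_U_iff)
  then have least: "principal_char e \<in> U e" using principal_char_in_U e(1) by blast
  have "compactin arr_top (\<gamma> s ` U e)"
  proof (rule compactin_if_in_every_neighbourhood)
    show "\<gamma> s ` U e \<subseteq> topspace arr_top" using germ_in_topspace e(3) by blast
    show "\<gamma> s (principal_char e) \<in> \<gamma> s ` U e" using least by (rule imageI)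
    fix T assume T: "openin arr_top T" "\<gamma> s (principal_char e) \<in> T"
    show "\<gamma> s ` U e \<subseteq> T"
    proof (rule image_subsetI)
      fix \<psi> assume "\<psi> \<in> U e"
      have "principal_char e \<in> U (ss s)" using least e(3) by blast
      moreover have "\<psi> \<in> Chars" using \<open>\<psi> \<in> U e\<close> by (simp add: mem_U_iff)
      ultimately show "\<gamma> s \<psi> \<in> T"
        using openin_arr_top_upward_closed[OF T(1) _ T(2)] principal_char_le[OF e(1) \<open>\<psi> \<in> U e\<close>]
        by blast
    qed
  qed
  moreover have "openin arr_top (\<gamma> s ` U e)"
    using openin_germ_image openin_U[OF e(1)] e(3) by blast
  moreover have "x \<in> \<gamma> s ` U e" using x(1) e(2) by simp
  moreover have "\<gamma> s ` U e \<subseteq> W" using e(3) by blast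
  ultimately show "\<exists>U V. openin arr_top U \<and> compactin arr_top V \<and> x \<in> U \<and> U \<subseteq> V \<and> V \<subseteq> W"
    by blast
qed

lemma fibre_meets_germ_image:
  assumes "e \<in> E" "\<phi> \<in> fibre A s" "\<phi> e"
  shows "\<gamma> s ` (U e \<inter> U (ss s)) \<inter> A \<noteq> {}"
proof -
  have "\<phi> \<in> U e \<inter> U (ss s)" using assms by (simp add: mem_U_iff)
  then have "\<gamma> s \<phi> \<in> \<gamma> s ` (U e \<inter> U (ss s))" by (rule imageI)
  with assms(2) show ?thesis by blast
qed

lemma Sup_fibre_in_U:
  assumes irr: "irreducible_closed arr_top A" and "\<phi>\<^sub>0 \<in> fibre A s"
  shows "Sup (fibre A s) \<in> U (ss s)"
proof -
  have directed: "Sup (fibre A s) (m e f)"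
    if e: "e \<in> E" and f: "f \<in> E" and sup: "Sup (fibre A s) e" "Sup (fibre A s) f" for e f
  proof -
    obtain \<phi>\<^sub>1 \<phi>\<^sub>2 where "\<phi>\<^sub>1 \<in> fibre A s" "\<phi>\<^sub>1 e" "\<phi>\<^sub>2 \<in> fibre A s" "\<phi>\<^sub>2 f"
      using sup by auto
    then have "\<gamma> s ` (U e \<inter> U (ss s)) \<inter> \<gamma> s ` (U f \<inter> U (ss s)) \<inter> A \<noteq> {}"
      using irreducible_closed_openin_Int[OF irr] openin_germ_image openin_U openin_U_ss e f
        fibre_meets_germ_image by (meson inf_le2 openin_Int)
    then obtain x \<rho>\<^sub>1 \<rho>\<^sub>2 where \<rho>: "\<rho>\<^sub>1 \<in> U e \<inter> U (ss s)" "\<rho>\<^sub>2 \<in> U f \<inter> U (ss s)"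
      "x = \<gamma> s \<rho>\<^sub>1" "x = \<gamma> s \<rho>\<^sub>2" "x \<in> A"
      by auto
    then have "\<rho>\<^sub>1 = \<rho>\<^sub>2" using germ_inj[of \<rho>\<^sub>1 s s \<rho>\<^sub>2] by simp
    then have "\<rho>\<^sub>1 \<in> fibre A s" "\<rho>\<^sub>1 (m e f)"
      using \<rho> char_mult[OF _ e f] by (auto simp: mem_U_iff)
    then show ?thesis by auto
  qed
  have "fibre A s \<subseteq> Chars" by (auto simp: mem_U_iff)
  with assms(2) directed have "Sup (fibre A s) \<in> Chars"
    by (intro Sup_chars_in_chars) auto
  moreover have "\<phi>\<^sub>0 \<le> Sup (fibre A s)" using assms(2) by (rule Sup_upper)
  ultimately show ?thesis using assms(2) by (auto simp: mem_U_iff le_fun_def)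
qed

lemma germ_Sup_fibre_mem:
  assumes "closedin arr_top A" "Sup (fibre A s) \<in> U (ss s)"
  shows "\<gamma> s (Sup (fibre A s)) \<in> A"
proof (rule ccontr)
  assume "\<gamma> s (Sup (fibre A s)) \<notin> A"
  then have "Sup (fibre A s) \<in> fibre (topspace arr_top - A) s"
    using assms(2) germ_in_topspace by blast
  moreover have "openin char_top (fibre (topspace arr_top - A) s)"
    using assms(1) unfolding closedin_def by (blast intro: openin_germ_preimage)
  moreover have "fibre A s \<subseteq> Chars" by (auto simp: mem_U_iff)
  ultimately have "fibre (topspace arr_top - A) s \<inter> fibre A s \<noteq> {}"
    using Sup_in_closure by blast
  then show False by blast
qed

lemma closure_germ_Sup_fibre:
  assumes irr: "irreducible_closed arr_top A" and "\<phi>\<^sub>0 \<in> fibre A s"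
  shows "arr_top closure_of {\<gamma> s (Sup (fibre A s))} = A"
proof
  let ?F = "Sup (fibre A s)"
  have F: "?F \<in> U (ss s)" using Sup_fibre_in_U assms .
  have closed: "closedin arr_top A" using irr by (simp add: irreducible_closed_def)
  show "arr_top closure_of {\<gamma> s ?F} \<subseteq> A"
    using germ_Sup_fibre_mem[OF closed F] closed by (intro closure_of_minimal) simp_all
  show "A \<subseteq> arr_top closure_of {\<gamma> s ?F}"
  proof
    fix x assume "x \<in> A"
    show "x \<in> arr_top closure_of {\<gamma> s ?F}"
    proof (rule in_closure_of_singletonI)
      show "x \<in> topspace arr_top" using \<open>x \<in> A\<close> closed closedin_subset by blast
      fix T assume T: "openin arr_top T" "x \<in> T"
      have "\<gamma> s \<phi>\<^sub>0 \<in> \<gamma> s ` U (ss s) \<inter> A" using assms(2) by simp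
      then have "T \<inter> \<gamma> s ` U (ss s) \<inter> A \<noteq> {}"
        using irreducible_closed_openin_Int[OF irr T(1) openin_germ_image[OF openin_U_ss subset_refl]]
          T(2) \<open>x \<in> A\<close> by blast
      then obtain \<rho> where \<rho>: "\<rho> \<in> fibre A s" "\<gamma> s \<rho> \<in> T" by blast
      show "\<gamma> s ?F \<in> T"
      proof (rule openin_arr_top_upward_closed)
        show "\<rho> \<le> ?F" using \<rho>(1) by (rule Sup_upper)
      qed (use \<rho> T F in \<open>auto simp: mem_U_iff\<close>)
    qed
  qed
qed

lemma sober_space_arr_top: "sober_space arr_top"
proof (rule sober_spaceI)
  fix A assume "A \<noteq> {}" and irr: "irreducible_closed arr_top A"
  then obtain x where "x \<in> A" "x \<in> Arr"
    using closedin_subset topspace_arr_top by (fastforce simp: irreducible_closed_def)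
  then obtain s \<phi> where "x = \<gamma> s \<phi>" "\<phi> \<in> U (ss s)" by (meson arrowsE)
  with \<open>x \<in> A\<close> have \<phi>: "\<phi> \<in> fibre A s" by simp
  show "\<exists>x\<in>topspace arr_top. arr_top closure_of {x} = A"
  proof
    show "arr_top closure_of {\<gamma> s (Sup (fibre A s))} = A"
      by (rule closure_germ_Sup_fibre[OF irr \<phi>])
    show "\<gamma> s (Sup (fibre A s)) \<in> topspace arr_top"
      by (rule germ_in_topspace[OF Sup_fibre_in_U[OF irr \<phi>]])
  qed
qed (rule arr_top_T0; simp add: topspace_arr_top)

end

theorem lemma3p3:
  fixes m :: "'a \<Rightarrow> 'a \<Rightarrow> 'a" and z u :: 'a
  assumes "inverse_semigroup_zu m z u"
  shows "locally_quasi_compact (arrow_topology m z u) \<and> sober_space (arrow_topology m z u)"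
proof -
  interpret inverse_monoid_zero m z u by (rule inverse_monoid_zero.intro) (rule assms)
  show ?thesis using locally_quasi_compact_arr_top sober_space_arr_top by blast
qed

end
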